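(* Let $\alpha$ be a set and $\odot:\alpha\times\alpha\to\alpha$. Calls $\mathrm{treeReduce}(\odot,\mathit{rdd})$ have deterministic outcomes if and only if calls $\mathrm{reduce}(\odot,\mathit{rdd})$ have deterministic outcomes.
   Context: Lists are finite; $\mathbin{+\!\!+}$ is concatenation. $\mathrm{foldl}(f,b,[\,])=b$, $\mathrm{foldl}(f,b,[x_1,\dots,x_n])=f(\cdots f(f(b,x_1),x_2)\cdots,x_n)$; $\mathrm{reducel}(f,[x_1,\dots,x_n])=\mathrm{foldl}(f,x_1,[x_2,\dots,x_n])$ for nonempty lists. An RDD is a list of lists. A partitioning is a function $P$ sending each nonempty list $L$ to an RDD obtained by splitting $L$ into consecutive nonempty pieces $p_1,\dots,p_n$ with $p_1\mathbin{+\!\!+}\cdots\mathbin{+\!\!+}p_n=L$ and then arbitrarily permuting $[p_1,\dots,p_n]$. $\mathrm{reduce}_{\mathrm{det}}(\odot,[q_1,\dots,q_m])=\mathrm{reducel}(\odot,[\mathrm{reducel}(\odot,q_1),\dots,\mathrm{reducel}(\odot,q_m)])$; calls to $\mathrm{reduce}$ have deterministic outcomes if $\mathrm{reduce}_{\mathrm{det}}(\odot,P(L))=\mathrm{reducel}(\odot,L)$ for all nonempty $L$ and all partitionings $P$. An instantiation of $\mathrm{apply}$ is any deterministic procedure which, given $\odot$ and a nonempty list $[r_1,\dots,r_m]$, returns the value obtained by repeatedly replacing two adjacent elements $l',r'$ of the current list by $l'\odot r'$ until one element remains. $\mathrm{treeReduce}_{\mathrm{bt}}(\mathrm{apply},\odot,[q_1,\dots,q_m])=\mathrm{apply}(\odot,[\mathrm{reducel}(\odot,q_1),\dots,\mathrm{reducel}(\odot,q_m)])$.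 Calls $\mathrm{treeReduce}(\odot,\mathit{rdd})$ have deterministic outcomes if $\mathrm{treeReduce}_{\mathrm{bt}}(\mathrm{apply},\odot,P(L))=\mathrm{reducel}(\odot,L)$ for all nonempty lists $L$, partitionings $P$, and instantiations $\mathrm{apply}$. *)

theory Defs
  imports "HOL-Library.Multiset"
begin

fun reducel :: "('a \<Rightarrow> 'a \<Rightarrow> 'a) \<Rightarrow> 'a list \<Rightarrow> 'a" where
  "reducel f (x # xs) = foldl f x xs"
| "reducel f [] = undefined"

text \<open>A partitioning: sends every nonempty list L to a permutation of a split of L
  into consecutive nonempty pieces.\<close>
definition is_partitioning :: "('a list \<Rightarrow> 'a list list) \<Rightarrow> bool" where
  "is_partitioning P \<longleftrightarrow>
     (\<forall>L. L \<noteq> [] \<longrightarrow>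
        (\<exists>ps. (\<forall>p\<in>set ps. p \<noteq> []) \<and> concat ps = L \<and> mset (P L) = mset ps))"

definition reduce_det :: "('a \<Rightarrow> 'a \<Rightarrow> 'a) \<Rightarrow> 'a list list \<Rightarrow> 'a" where
  "reduce_det f qs = reducel f (map (reducel f) qs)"

definition reduce_deterministic :: "('a \<Rightarrow> 'a \<Rightarrow> 'a) \<Rightarrow> bool" where
  "reduce_deterministic f \<longleftrightarrow>
     (\<forall>P L. is_partitioning P \<longrightarrow> L \<noteq> [] \<longrightarrow> reduce_det f (P L) = reducel f L)"

inductive combines :: "('a \<Rightarrow> 'a \<Rightarrow> 'a) \<Rightarrow> 'a list \<Rightarrow> 'a \<Rightarrow> bool" for f where
  single: "combines f [x] x"
| step: "combines f (ys @ f l r # zs) v \<Longrightarrow> combines f (ys @ l # r # zs) v"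

text \<open>An instantiation of apply: a (deterministic) function which on every operator and
  every nonempty list returns a value obtainable by adjacent combination.\<close>
definition is_apply :: "(('a \<Rightarrow> 'a \<Rightarrow> 'a) \<Rightarrow> 'a list \<Rightarrow> 'a) \<Rightarrow> bool" where
  "is_apply app \<longleftrightarrow> (\<forall>f xs. xs \<noteq> [] \<longrightarrow> combines f xs (app f xs))"

definition treeReduce_bt ::
  "(('a \<Rightarrow> 'a \<Rightarrow> 'a) \<Rightarrow> 'a list \<Rightarrow> 'a) \<Rightarrow> ('a \<Rightarrow> 'a \<Rightarrow> 'a) \<Rightarrow> 'a list list \<Rightarrow> 'a" where
  "treeReduce_bt app f qs = app f (map (reducel f) qs)"

definition treeReduce_deterministic :: "('a \<Rightarrow> 'a \<Rightarrow> 'a) \<Rightarrow> bool" where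
  "treeReduce_deterministic f \<longleftrightarrow>
     (\<forall>app P L. is_apply app \<longrightarrow> is_partitioning P \<longrightarrow> L \<noteq> [] \<longrightarrow>
        treeReduce_bt app f (P L) = reducel f L)"

end

theory Submission
  imports Defs
begin

text \<open>Left-to-right reduction is one admissible order of adjacent combinations, so reducel is an
  instantiation of apply; this gives treeReduce \<Rightarrow> reduce. Conversely, partitionings that only
  reorder the pieces of [a, b] and of [a, b, c] force the operator to be commutative and
  associative, and for an associative operator every order of adjacent combinations yields the
  left-to-right reduction.\<close>

lemma combines_foldl: "combines f (x # xs) (foldl f x xs)"
proof (induction xs arbitrary: x)
  case Nil
  then show ?case by (simp add: combines.single)
next
  case (Cons y xs)
  have "combines f ([] @ f x y # xs) (foldl f (f x y) xs)" using Cons by simp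
  then have "combines f ([] @ x # y # xs) (foldl f (f x y) xs)" by (rule combines.step)
  then show ?case by simp
qed

lemma is_apply_reducel: "is_apply reducel"
  unfolding is_apply_def
proof (intro allI impI)
  fix f :: "'a \<Rightarrow> 'a \<Rightarrow> 'a" and xs :: "'a list"
  assume "xs \<noteq> []"
  then obtain x ys where "xs = x # ys" by (cases xs) auto
  then show "combines f xs (reducel f xs)" by (simp add: combines_foldl)
qed

lemma reducel_combine_adjacent:
  assumes assoc: "\<And>x y z. f (f x y) z = f x (f y z)"
  shows "reducel f (ys @ f l r # zs) = reducel f (ys @ l # r # zs)"
  by (cases ys) (simp_all add: assoc)

lemma combines_imp_reducel:
  assumes assoc: "\<And>x y z. f (f x y) z = f x (f y z)"
    and "combines f xs v"
  shows "v = reducel f xs"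
  using assms(2)
  by induction (simp_all add: reducel_combine_adjacent[OF assoc])

lemma is_partitioning_permute_one:
  assumes "\<forall>p\<in>set ps. p \<noteq> []" and "concat ps = L\<^sub>0" and "mset qs = mset ps"
  shows "is_partitioning (\<lambda>L. if L = L\<^sub>0 then qs else [L])"
  unfolding is_partitioning_def
proof (intro allI impI)
  fix L :: "'a list"
  assume "L \<noteq> []"
  show "\<exists>ps. (\<forall>p\<in>set ps. p \<noteq> []) \<and> concat ps = L \<and>
          mset (if L = L\<^sub>0 then qs else [L]) = mset ps"
  proof (cases "L = L\<^sub>0")
    case True
    then show ?thesis using assms by (intro exI[of _ ps]) simp
  next
    case False
    then show ?thesis using \<open>L \<noteq> []\<close> by (intro exI[of _ "[L]"]) simp
  qed
qed

lemma is_partitioning_nonempty: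
  assumes "is_partitioning P" and "L \<noteq> []"
  shows "P L \<noteq> []"
  using assms unfolding is_partitioning_def by fastforce

lemma reduce_deterministic_commute:
  assumes "reduce_deterministic f"
  shows "f a b = f b a"
proof -
  define P where "P = (\<lambda>L. if L = [a, b] then [[b], [a]] else [L])"
  have "is_partitioning P"
    unfolding P_def by (rule is_partitioning_permute_one[of "[[a], [b]]"]) auto
  with assms have "reduce_det f (P [a, b]) = reducel f [a, b]"
    unfolding reduce_deterministic_def by blast
  then show ?thesis by (simp add: P_def reduce_det_def)
qed

lemma reduce_deterministic_assoc:
  assumes "reduce_deterministic f"
  shows "f (f a b) c = f a (f b c)"
proof -
  define P where "P = (\<lambda>L. if L = [a, b, c] then [[b, c], [a]] else [L])"
  have "is_partitioning P"
    unfolding P_def by (rule is_partitioning_permute_one[of "[[a], [b, c]]"]) auto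
  with assms have "reduce_det f (P [a, b, c]) = reducel f [a, b, c]"
    unfolding reduce_deterministic_def by blast
  then have "f (f b c) a = f (f a b) c" by (simp add: P_def reduce_det_def)
  then show ?thesis using reduce_deterministic_commute[OF assms, of "f b c" a] by simp
qed

lemma treeReduce_deterministic_imp_reduce_deterministic:
  "treeReduce_deterministic f \<Longrightarrow> reduce_deterministic f"
  using is_apply_reducel
  unfolding treeReduce_deterministic_def reduce_deterministic_def
    treeReduce_bt_def reduce_det_def
  by blast

lemma reduce_deterministic_imp_treeReduce_deterministic:
  assumes det: "reduce_deterministic f"
  shows "treeReduce_deterministic f"
  unfolding treeReduce_deterministic_def
proof (intro allI impI)
  fix app :: "('a \<Rightarrow> 'a \<Rightarrow> 'a) \<Rightarrow> 'a list \<Rightarrow> 'a"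
    and P :: "'a list \<Rightarrow> 'a list list" and L :: "'a list"
  assume app: "is_apply app" and P: "is_partitioning P" and "L \<noteq> []"
  have "map (reducel f) (P L) \<noteq> []"
    using is_partitioning_nonempty[OF P \<open>L \<noteq> []\<close>] by simp
  with app have "combines f (map (reducel f) (P L)) (app f (map (reducel f) (P L)))"
    unfolding is_apply_def by blast
  then have "treeReduce_bt app f (P L) = reduce_det f (P L)"
    unfolding treeReduce_bt_def reduce_det_def
    by (rule combines_imp_reducel[OF reduce_deterministic_assoc[OF det]])
  also have "\<dots> = reducel f L"
    using det P \<open>L \<noteq> []\<close> unfolding reduce_deterministic_def by blast
  finally show "treeReduce_bt app f (P L) = reducel f L" .
qed

theorem proposition2:
  fixes f :: "'a \<Rightarrow> 'a \<Rightarrow> 'a"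
  shows "treeReduce_deterministic f \<longleftrightarrow> reduce_deterministic f"
  using treeReduce_deterministic_imp_reduce_deterministic
    reduce_deterministic_imp_treeReduce_deterministic
  by blast

end
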